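(* Let $\mathcal{D}$ be a finite domain of search histories with $|\mathcal{D}|\ge 2$ and $U\ge 1$. For any search log $S\in\mathcal{D}^U$, every output of Algorithm $\hat{\mathcal{A}}$ on $S$ constitutes a privacy breach according to $\epsilon$-differential privacy for every $\epsilon$: that is, for every $O$ with $\Pr[\hat{\mathcal{A}}(S)=O]>0$ there is a neighboring search log $S'$ with $\Pr[\hat{\mathcal{A}}(S)=O] > e^{\epsilon}\Pr[\hat{\mathcal{A}}(S')=O]$.
   Context: A search log is an element $S=(S_1,\dots,S_U)\in\mathcal{D}^U$, where $S_i$ is user $i$'s search history. Two search logs are neighboring if they differ in exactly one user's history. Algorithm $\hat{\mathcal{A}}$, on input $S$, samples uniformly at random an element of $\mathcal{D}\setminus\{S_1\}$ and returns it. *)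

theory Defs
  imports "HOL-Probability.Probability"
begin

text \<open>A search log over domain D with U users is a list of length U with entries in D;
  list index 0 is user 1.\<close>
definition search_log :: "'a set \<Rightarrow> nat \<Rightarrow> 'a list \<Rightarrow> bool" where
  "search_log D U S \<longleftrightarrow> length S = U \<and> set S \<subseteq> D"

definition neighboring :: "'a list \<Rightarrow> 'a list \<Rightarrow> bool" where
  "neighboring S S' \<longleftrightarrow> length S = length S' \<and>
     card {i. i < length S \<and> S ! i \<noteq> S' ! i} = 1"

definition alg_hat :: "'a set \<Rightarrow> 'a list \<Rightarrow> 'a pmf" where
  "alg_hat D S = pmf_of_set (D - {S ! 0})"

end

theory Submission
  imports Defs
begin

text \<open>The output of the algorithm is never the first user's history. Making the observed output
  the first user's history therefore gives a neighboring log on which that output has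
  probability zero, while on the original log it has positive probability; no factor
  \<open>exp \<epsilon>\<close> can bound a positive probability by zero.\<close>

lemma card_ge_2_not_subset_singleton:
  assumes "finite A" and "card A \<ge> 2"
  shows "\<not> A \<subseteq> {x}"
  using assms card_mono[of "{x}" A] by auto

lemma set_pmf_alg_hat:
  assumes "finite D" and "card D \<ge> 2"
  shows "set_pmf (alg_hat D S) = D - {S ! 0}"
proof -
  have "D - {S ! 0} \<noteq> {}"
    using card_ge_2_not_subset_singleton[OF assms] by simp
  then show ?thesis
    unfolding alg_hat_def using assms(1) by (simp add: set_pmf_of_set)
qed

lemma search_log_list_update:
  assumes "search_log D U S" and "x \<in> D"
  shows "search_log D U (S[i := x])"
  using assms set_update_subset_insert by (fastforce simp: search_log_def)

lemma neighboring_list_update: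
  assumes "i < length S" and "x \<noteq> S ! i"
  shows "neighboring S (S[i := x])"
proof -
  have "{j. j < length S \<and> S ! j \<noteq> S[i := x] ! j} = {i}"
    using assms by (auto simp: nth_list_update)
  then show ?thesis by (simp add: neighboring_def)
qed
theorem proposition3:
  fixes D :: "'a set" and U :: nat and S :: "'a list" and \<epsilon> :: real
  assumes "finite D" and "card D \<ge> 2" and "U \<ge> 1"
    and "search_log D U S"
  shows "\<forall>out. pmf (alg_hat D S) out > 0 \<longrightarrow>
           (\<exists>S'. search_log D U S' \<and> neighboring S S' \<and>
                 pmf (alg_hat D S) out > exp \<epsilon> * pmf (alg_hat D S') out)"
proof (intro allI impI)
  fix out assume pos: "pmf (alg_hat D S) out > 0"
  then have out: "out \<in> D - {S ! 0}"
    by (metis set_pmf_alg_hat[OF assms(1,2)] set_pmf_iff less_irrefl)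
  have "0 < length S"
    using assms(3,4) by (simp add: search_log_def)
  define S' where "S' = S[0 := out]"
  have "out \<notin> set_pmf (alg_hat D S')"
    using set_pmf_alg_hat[OF assms(1,2), of S'] \<open>0 < length S\<close> by (simp add: S'_def)
  then have "pmf (alg_hat D S') out = 0"
    by (simp add: set_pmf_iff)
  moreover have "search_log D U S'"
    using assms(4) out by (simp add: S'_def search_log_list_update)
  moreover have "neighboring S S'"
    using \<open>0 < length S\<close> out by (simp add: S'_def neighboring_list_update)
  ultimately show "\<exists>S'. search_log D U S' \<and> neighboring S S' \<and>
                 pmf (alg_hat D S) out > exp \<epsilon> * pmf (alg_hat D S') out"
    using pos by auto
qed

end
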